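(* Let ${\mathbb X}$ be a real inner product space with ${\mathbb X}\ne\{0\}$, let $M\colon[0,\infty)\times[0,\infty)\to[0,\infty)$ be symmetric and moderately increasing, and suppose $\rho_M(x,y)=\dfrac{\Vert x-y\Vert}{M(\Vert x\Vert,\Vert y\Vert)}$ is a metric on ${\mathbb X}$. Then $\rho_M$ is locally star--shaped.
   Context: Convention $0/0=0$. A function $f\colon[0,\infty)\to[0,\infty)$ is moderately increasing if it is increasing and $f(t)/t$ is decreasing; $M$ is moderately increasing if $M(x,\cdot)$ and $M(\cdot,x)$ are moderately increasing for each fixed $x$. A metric $d$ is locally star--shaped if for every $x$ there is $r_0>0$ such that for every $0<r<r_0$ the ball $B_d(x,r)=\{y: d(x,y)<r\}$ is star--shaped with respect to $x$, i.e. every ray emanating from $x$ meets $\partial B_d(x,r)$ exactly once. *)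

theory Defs
  imports "HOL-Analysis.Analysis"
begin

definition mod_incr :: "(real \<Rightarrow> real) \<Rightarrow> bool" where
  "mod_incr f \<longleftrightarrow>
     (\<forall>s t. 0 \<le> s \<longrightarrow> s \<le> t \<longrightarrow> f s \<le> f t) \<and>
     (\<forall>s t. 0 < s \<longrightarrow> s \<le> t \<longrightarrow> f t / t \<le> f s / s)"

definition mod_incr2 :: "(real \<Rightarrow> real \<Rightarrow> real) \<Rightarrow> bool" where
  "mod_incr2 M \<longleftrightarrow> (\<forall>x\<ge>0. mod_incr (\<lambda>t. M x t) \<and> mod_incr (\<lambda>t. M t x))"

text \<open>The quantity rho_M; division uses Isabelle's convention a/0 = 0 (in particular 0/0 = 0).\<close>
definition rhoM :: "(real \<Rightarrow> real \<Rightarrow> real) \<Rightarrow> 'a::real_normed_vector \<Rightarrow> 'a \<Rightarrow> real" where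
  "rhoM M x y = norm (x - y) / M (norm x) (norm y)"

definition is_metric :: "('a \<Rightarrow> 'a \<Rightarrow> real) \<Rightarrow> bool" where
  "is_metric d \<longleftrightarrow>
     (\<forall>x y. 0 \<le> d x y) \<and> (\<forall>x y. d x y = 0 \<longleftrightarrow> x = y) \<and>
     (\<forall>x y. d x y = d y x) \<and> (\<forall>x y z. d x z \<le> d x y + d y z)"

definition dball :: "('a \<Rightarrow> 'a \<Rightarrow> real) \<Rightarrow> 'a \<Rightarrow> real \<Rightarrow> 'a set" where
  "dball d x r = {y. d x y < r}"

definition star_shaped_wrt :: "'a::real_normed_vector set \<Rightarrow> 'a \<Rightarrow> bool" where
  "star_shaped_wrt B x \<longleftrightarrow>
     (\<forall>v. v \<noteq> 0 \<longrightarrow> (\<exists>!t. 0 \<le> t \<and> x + t *\<^sub>R v \<in> frontier B))"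

definition locally_star_shaped :: "('a::real_normed_vector \<Rightarrow> 'a \<Rightarrow> real) \<Rightarrow> bool" where
  "locally_star_shaped d \<longleftrightarrow>
     (\<forall>x. \<exists>r0>0. \<forall>r. 0 < r \<and> r < r0 \<longrightarrow> star_shaped_wrt (dball d x r) x)"

end

theory Submission
  imports Defs
begin

(* Let a = norm x. Since rho_M is a metric, M(a, .) is positive, and a moderately increasing
   function is continuous on (0, oo). For x <> 0, on the ball of radius a/2 about x the function
   y |-> rho_M(x, y) = norm (x - y) / M(a, norm y) is continuous and strictly increasing along
   every ray from x (M(a, t)/t decreases, so the denominator grows relatively slower than the
   numerator), while outside that ball it is bounded below by a positive constant; so the small
   rho_M-balls about x are sublevel sets whose frontier meets each ray exactly once.
   For x = 0, rho_M(0, y) = norm y / M(0, norm y) is a nondecreasing function of norm y, so every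
   proper rho_M-ball about 0 is an open or closed norm ball. *)

lemma ray_meets_frontier:
  fixes x v :: "'a::real_normed_vector"
  assumes "x \<in> B" "0 \<le> t" "x + t *\<^sub>R v \<notin> B"
  shows "\<exists>s\<ge>0. x + s *\<^sub>R v \<in> frontier B"
proof -
  have "closed_segment x (x + t *\<^sub>R v) \<inter> frontier B \<noteq> {}"
    by (rule connected_Int_frontier) (use assms ends_in_segment in auto)
  then obtain u where u: "0 \<le> u" "u \<le> 1" "(1 - u) *\<^sub>R x + u *\<^sub>R (x + t *\<^sub>R v) \<in> frontier B"
    unfolding closed_segment_def by auto
  then have "x + (u * t) *\<^sub>R v \<in> frontier B"
    by (simp add: algebra_simps)
  then show ?thesis
    using u(1) assms(2) by (intro exI[of _ "u * t"]) simp
qed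

lemma star_shaped_wrtI:
  fixes B :: "'a::real_normed_vector set"
  assumes "x \<in> B"
    and leaves: "\<And>v. v \<noteq> 0 \<Longrightarrow> \<exists>t\<ge>0. x + t *\<^sub>R v \<notin> B"
    and no_two: "\<And>v s t. v \<noteq> 0 \<Longrightarrow> 0 \<le> s \<Longrightarrow> s < t \<Longrightarrow>
      x + s *\<^sub>R v \<in> frontier B \<Longrightarrow> x + t *\<^sub>R v \<in> frontier B \<Longrightarrow> False"
  shows "star_shaped_wrt B x"
  unfolding star_shaped_wrt_def
proof (intro allI impI ex_ex1I)
  fix v :: 'a
  assume "v \<noteq> 0"
  then show "\<exists>t. 0 \<le> t \<and> x + t *\<^sub>R v \<in> frontier B"
    using leaves ray_meets_frontier[OF \<open>x \<in> B\<close>] by blast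
  show "s = t" if "0 \<le> s \<and> x + s *\<^sub>R v \<in> frontier B" "0 \<le> t \<and> x + t *\<^sub>R v \<in> frontier B"
    for s t
    using no_two[OF \<open>v \<noteq> 0\<close>] that by (cases s t rule: linorder_cases) auto
qed

lemma star_shaped_wrt_zero_if_norm_downward_closed:
  fixes B :: "'a::real_normed_vector set"
  assumes "0 \<in> B" "z \<notin> B"
    and down: "\<And>u w. u \<in> B \<Longrightarrow> norm w \<le> norm u \<Longrightarrow> w \<in> B"
  shows "star_shaped_wrt B 0"
proof (rule star_shaped_wrtI[OF \<open>0 \<in> B\<close>])
  fix v :: 'a
  assume "v \<noteq> 0"
  then have "norm z \<le> norm ((norm z / norm v) *\<^sub>R v)"
    by simp
  then have "(norm z / norm v) *\<^sub>R v \<notin> B"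
    using down \<open>z \<notin> B\<close> by blast
  then show "\<exists>t\<ge>0. 0 + t *\<^sub>R v \<notin> B"
    by (intro exI[of _ "norm z / norm v"]) simp
next
  fix v :: 'a and s t :: real
  assume v: "v \<noteq> 0" and "0 \<le> s" "s < t"
    and fr: "0 + s *\<^sub>R v \<in> frontier B" "0 + t *\<^sub>R v \<in> frontier B"
  have "t *\<^sub>R v \<in> closure B" "0 < (t - s) * norm v"
    using fr(2) v \<open>s < t\<close> by (auto simp: frontier_def)
  then obtain u where "u \<in> B" and u: "dist u (t *\<^sub>R v) < (t - s) * norm v"
    unfolding closure_approachable by blast
  have "t * norm v \<le> norm u + dist u (t *\<^sub>R v)"
    using norm_triangle_sub[of "t *\<^sub>R v" u] \<open>0 \<le> s\<close> \<open>s < t\<close>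
    by (simp add: dist_norm norm_minus_commute)
  then have "s *\<^sub>R v \<in> ball 0 (norm u)"
    using u \<open>0 \<le> s\<close> by (simp add: left_diff_distrib)
  moreover have "ball 0 (norm u) \<subseteq> interior B"
    using down[OF \<open>u \<in> B\<close>] by (intro interior_maximal) auto
  ultimately have "s *\<^sub>R v \<in> interior B"
    by blast
  then show False
    using fr(1) by (simp add: frontier_def)
qed

lemma level_at_frontier_of_sublevel:
  fixes f :: "'a::t2_space \<Rightarrow> 'b::linorder_topology"
  assumes "isCont f y" "y \<in> frontier {z. f z < r}"
  shows "f y = r"
proof (rule ccontr)
  assume "f y \<noteq> r"
  then consider "f y < r" | "r < f y"
    by (meson linorder_neqE)
  then show False
  proof cases
    case 1
    then obtain S where "open S" "y \<in> S" "\<forall>z\<in>S. f z < r"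
      using assms(1) continuous_at_open[of y f] by (metis lessThan_iff open_lessThan)
    then have "y \<in> interior {z. f z < r}"
      by (meson interiorI mem_Collect_eq subsetI)
    then show False
      using assms(2) by (simp add: frontier_def)
  next
    case 2
    then obtain S where "open S" "y \<in> S" "\<forall>z\<in>S. r < f z"
      using assms(1) continuous_at_open[of y f] by (metis greaterThan_iff open_greaterThan)
    then have "S \<inter> {z. f z < r} = {}"
      by fastforce
    then have "y \<notin> closure {z. f z < r}"
      using \<open>open S\<close> \<open>y \<in> S\<close> open_Int_closure_eq_empty by blast
    then show False
      using assms(2) by (simp add: frontier_def)
  qed
qed

lemma star_shaped_wrt_sublevel:
  fixes f :: "'a::real_normed_vector \<Rightarrow> real"
  assumes "0 < R" "f x < r"
    and cont: "\<And>y. norm (y - x) \<le> R \<Longrightarrow> isCont f y"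
    and far: "\<And>y. R \<le> norm (y - x) \<Longrightarrow> r \<le> f y"
    and incr: "\<And>v s t. v \<noteq> 0 \<Longrightarrow> 0 \<le> s \<Longrightarrow> s < t \<Longrightarrow> t * norm v \<le> R \<Longrightarrow>
      f (x + s *\<^sub>R v) < f (x + t *\<^sub>R v)"
  shows "star_shaped_wrt {y. f y < r} x"
proof -
  have "{y. f y < r} \<subseteq> cball x R"
  proof
    fix y
    assume "y \<in> {y. f y < r}"
    then have "norm (y - x) < R"
      using far[of y] by fastforce
    then show "y \<in> cball x R"
      by (simp add: dist_norm norm_minus_commute)
  qed
  then have "frontier {y. f y < r} \<subseteq> cball x R"
    using closure_minimal[OF _ closed_cball] frontier_def by blast
  then have near: "norm (y - x) \<le> R" if "y \<in> frontier {y. f y < r}" for y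
    using that by (auto simp: dist_norm norm_minus_commute)
  show ?thesis
  proof (rule star_shaped_wrtI)
    show "x \<in> {y. f y < r}"
      using \<open>f x < r\<close> by simp
  next
    fix v :: 'a
    assume "v \<noteq> 0"
    then show "\<exists>t\<ge>0. x + t *\<^sub>R v \<notin> {y. f y < r}"
      using far[of "x + (R / norm v) *\<^sub>R v"] \<open>0 < R\<close>
      by (intro exI[of _ "R / norm v"]) auto
  next
    fix v :: 'a and s t :: real
    assume "v \<noteq> 0" "0 \<le> s" "s < t"
      and fr: "x + s *\<^sub>R v \<in> frontier {y. f y < r}" "x + t *\<^sub>R v \<in> frontier {y. f y < r}"
    have "f (x + s *\<^sub>R v) = r" "f (x + t *\<^sub>R v) = r"
      using fr near cont level_at_frontier_of_sublevel by blast+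
    moreover have "t * norm v \<le> R"
      using near[OF fr(2)] \<open>0 \<le> s\<close> \<open>s < t\<close> by simp
    ultimately show False
      using incr[OF \<open>v \<noteq> 0\<close> \<open>0 \<le> s\<close> \<open>s < t\<close>] by simp
  qed
qed

lemma mod_incr_isCont:
  assumes f: "mod_incr f" and "0 < p"
  shows "isCont f p"
proof -
  have mono: "\<And>s t. 0 \<le> s \<Longrightarrow> s \<le> t \<Longrightarrow> f s \<le> f t"
    and ratio: "\<And>s t. 0 < s \<Longrightarrow> s \<le> t \<Longrightarrow> f t / t \<le> f s / s"
    using f unfolding mod_incr_def by auto
  have bounds: "min 1 (q / p) * f p \<le> f q \<and> f q \<le> max 1 (q / p) * f p" if "0 < q" for q
  proof (cases "q \<le> p")
    case True
    then have "f q \<le> f p" "q / p * f p \<le> f q"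
      using mono ratio[of q p] \<open>0 < p\<close> \<open>0 < q\<close> by (simp_all add: field_simps)
    then show ?thesis
      using True \<open>0 < p\<close> by simp
  next
    case False
    then have "f p \<le> f q" "f q \<le> q / p * f p"
      using mono ratio[of p q] \<open>0 < p\<close> \<open>0 < q\<close> by (simp_all add: field_simps)
    then show ?thesis
      using False \<open>0 < p\<close> by simp
  qed
  have "eventually (\<lambda>q. 0 < q) (at p)"
    using order_tendstoD(1)[OF tendsto_ident_at \<open>0 < p\<close>] .
  then have "eventually (\<lambda>q. min 1 (q / p) * f p \<le> f q) (at p)"
    "eventually (\<lambda>q. f q \<le> max 1 (q / p) * f p) (at p)"
    by (auto elim: eventually_mono dest: bounds)
  moreover have "((\<lambda>q. min 1 (q / p) * f p) \<longlongrightarrow> min 1 (p / p) * f p) (at p)"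
    "((\<lambda>q. max 1 (q / p) * f p) \<longlongrightarrow> max 1 (p / p) * f p) (at p)"
    by (intro tendsto_intros; use \<open>0 < p\<close> in simp)+
  ultimately have "(f \<longlongrightarrow> f p) (at p)"
    using \<open>0 < p\<close> tendsto_sandwich by fastforce
  then show ?thesis
    unfolding isCont_def .
qed

lemma mod_incr_div_mono:
  assumes f: "mod_incr f" and "0 < s" "s \<le> t" "0 < f s"
  shows "s / f s \<le> t / f t"
proof -
  have "f s \<le> f t" "f t / t \<le> f s / s"
    using f \<open>0 < s\<close> \<open>s \<le> t\<close> unfolding mod_incr_def by auto
  then show ?thesis
    using \<open>0 < s\<close> \<open>s \<le> t\<close> \<open>0 < f s\<close> by (simp add: field_simps)
qed

lemma mod_incr_ratio_less:
  assumes f: "mod_incr f" and "0 < f g" "0 < f h"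
    and "0 \<le> p" "p < q" "p < g" "0 \<le> h" "h \<le> g + (q - p)"
  shows "p / f g < q / f h"
proof (cases "h \<le> g")
  case True
  then have "f h \<le> f g"
    using f \<open>0 \<le> h\<close> unfolding mod_incr_def by blast
  have "p / f g < q / f g"
    using \<open>0 < f g\<close> \<open>p < q\<close> by (simp add: divide_strict_right_mono)
  also have "\<dots> \<le> q / f h"
    using \<open>f h \<le> f g\<close> \<open>0 < f h\<close> \<open>0 \<le> p\<close> \<open>p < q\<close> by (intro divide_left_mono) auto
  finally show ?thesis .
next
  case False
  then have "0 < g" "g \<le> h"
    using \<open>0 \<le> p\<close> \<open>p < g\<close> by auto
  then have "f h / h \<le> f g / g"
    using f unfolding mod_incr_def by blast
  then have "g * f h \<le> h * f g"
    using \<open>0 < g\<close> \<open>g \<le> h\<close> by (simp add: field_simps)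
  then have "g * (p * f h) \<le> p * (h * f g)"
    using \<open>0 \<le> p\<close> mult_left_mono by (fastforce simp: algebra_simps)
  also have "\<dots> \<le> p * ((g + (q - p)) * f g)"
    using \<open>h \<le> g + (q - p)\<close> \<open>0 < f g\<close> \<open>0 \<le> p\<close> by (simp add: mult_left_mono)
  also have "\<dots> < g * (q * f g)"
  proof -
    have "0 < (g - p) * (q - p)"
      using \<open>p < g\<close> \<open>p < q\<close> by simp
    then have "p * (g + (q - p)) < g * q"
      by (simp add: algebra_simps)
    then show ?thesis
      using \<open>0 < f g\<close> by (simp add: mult.assoc[symmetric])
  qed
  finally have "p * f h < q * f g"
    using \<open>0 < g\<close> by simp
  then show ?thesis
    using \<open>0 < f g\<close> \<open>0 < f h\<close> by (simp add: field_simps)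
qed

lemma mod_incr_lower_bound:
  assumes f: "mod_incr f" and pos: "\<And>t. 0 \<le> t \<Longrightarrow> 0 < f t"
    and "0 \<le> a" "0 < R" "R \<le> u" "0 \<le> g" "g \<le> a + u"
  shows "R / f (a + R) \<le> u / f g"
proof -
  have "R / (a + R) \<le> u / (a + u)"
    using mult_left_mono[OF \<open>R \<le> u\<close> \<open>0 \<le> a\<close>] assms(3-5) by (simp add: field_simps)
  moreover have "(a + R) / f (a + R) \<le> (a + u) / f (a + u)"
    using assms(3-5) pos by (intro mod_incr_div_mono[OF f]) auto
  ultimately have "R / (a + R) * ((a + R) / f (a + R)) \<le> u / (a + u) * ((a + u) / f (a + u))"
    using assms(3-5) pos[of "a + R"] by (intro mult_mono) auto
  also have "\<dots> = u / f (a + u)"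
    using assms(3-5) by simp
  also have "\<dots> \<le> u / f g"
    using f assms(4-7) pos unfolding mod_incr_def by (intro divide_left_mono) auto
  finally show ?thesis
    using assms(3,4) by simp
qed
lemma M_norm_pos_if_metric:
  fixes p q :: "'a::real_normed_vector"
  assumes metric: "is_metric (rhoM M :: 'a \<Rightarrow> 'a \<Rightarrow> real)"
    and nonneg: "\<forall>s t. 0 \<le> s \<longrightarrow> 0 \<le> t \<longrightarrow> 0 \<le> M s t"
    and "p \<noteq> q"
  shows "0 < M (norm p) (norm q)"
proof -
  have "rhoM M p q \<noteq> 0"
    using metric \<open>p \<noteq> q\<close> unfolding is_metric_def by blast
  then have "M (norm p) (norm q) \<noteq> 0"
    unfolding rhoM_def by auto
  moreover have "0 \<le> M (norm p) (norm q)"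
    using nonneg by simp
  ultimately show ?thesis
    by linarith
qed

lemma M_pos_if_metric:
  fixes x :: "'a::real_normed_vector"
  assumes metric: "is_metric (rhoM M :: 'a \<Rightarrow> 'a \<Rightarrow> real)"
    and nonneg: "\<forall>s t. 0 \<le> s \<longrightarrow> 0 \<le> t \<longrightarrow> 0 \<le> M s t"
    and "x \<noteq> 0" "0 \<le> b"
  shows "0 < M (norm x) b"
proof -
  define q where "q = - (b / norm x) *\<^sub>R x"
  have "norm q = b"
    using \<open>x \<noteq> 0\<close> \<open>0 \<le> b\<close> by (simp add: q_def)
  have "x - q = (1 + b / norm x) *\<^sub>R x"
    by (simp add: q_def algebra_simps)
  moreover have "0 < 1 + b / norm x"
    using \<open>0 \<le> b\<close> by (simp add: add_pos_nonneg)
  ultimately have "x \<noteq> q"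
    using \<open>x \<noteq> 0\<close> by (metis eq_iff_diff_eq_0 less_irrefl scaleR_eq_0_iff)
  then show ?thesis
    using M_norm_pos_if_metric[OF metric nonneg] \<open>norm q = b\<close> by blast
qed

lemma isCont_rhoM:
  fixes x y :: "'a::real_normed_vector"
  assumes "mod_incr (M (norm x))" "y \<noteq> 0" "M (norm x) (norm y) \<noteq> 0"
  shows "isCont (rhoM M x) y"
proof -
  have "isCont (M (norm x)) (norm y)"
    using mod_incr_isCont assms(1,2) by simp
  then have "isCont (\<lambda>z. M (norm x) (norm z)) y"
    by (rule isCont_o2[OF continuous_norm[OF continuous_ident]])
  then show ?thesis
    unfolding rhoM_def[abs_def] using assms(3) by (intro continuous_intros)
qed

lemma rhoM_ray_strict_mono:
  fixes x v :: "'a::real_normed_vector"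
  assumes "mod_incr (M (norm x))" and pos: "\<And>b. 0 \<le> b \<Longrightarrow> 0 < M (norm x) b"
    and "v \<noteq> 0" "0 \<le> s" "s < t" "t * norm v \<le> norm x / 2"
  shows "rhoM M x (x + s *\<^sub>R v) < rhoM M x (x + t *\<^sub>R v)"
proof -
  have "norm x \<le> norm (x + s *\<^sub>R v) + s * norm v"
    using norm_triangle_sub[of x "x + s *\<^sub>R v"] \<open>0 \<le> s\<close> by (simp add: norm_minus_commute)
  moreover have "s * norm v < t * norm v"
    using \<open>v \<noteq> 0\<close> \<open>s < t\<close> by simp
  ultimately have "s * norm v < norm (x + s *\<^sub>R v)"
    using \<open>t * norm v \<le> norm x / 2\<close> by linarith
  moreover have "norm (x + t *\<^sub>R v) \<le> norm (x + s *\<^sub>R v) + norm ((t - s) *\<^sub>R v)"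
    using norm_triangle_ineq[of "x + s *\<^sub>R v" "(t - s) *\<^sub>R v"] by (simp add: algebra_simps)
  then have "norm (x + t *\<^sub>R v) \<le> norm (x + s *\<^sub>R v) + (t * norm v - s * norm v)"
    using \<open>s < t\<close> by (simp add: left_diff_distrib)
  ultimately have "s * norm v / M (norm x) (norm (x + s *\<^sub>R v))
      < t * norm v / M (norm x) (norm (x + t *\<^sub>R v))"
    using \<open>v \<noteq> 0\<close> \<open>0 \<le> s\<close> \<open>s < t\<close> pos
    by (intro mod_incr_ratio_less[OF assms(1)]) auto
  then show ?thesis
    using \<open>0 \<le> s\<close> \<open>s < t\<close> by (simp add: rhoM_def)
qed

lemma rhoM_lower_bound:
  fixes x y :: "'a::real_normed_vector"
  assumes "mod_incr (M (norm x))" and pos: "\<And>b. 0 \<le> b \<Longrightarrow> 0 < M (norm x) b"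
    and "0 < R" "R \<le> norm (y - x)"
  shows "R / M (norm x) (norm x + R) \<le> rhoM M x y"
proof -
  have "norm y \<le> norm x + norm (y - x)"
    using norm_triangle_sub[of y x] by simp
  then have "R / M (norm x) (norm x + R) \<le> norm (y - x) / M (norm x) (norm y)"
    using pos assms(3,4) by (intro mod_incr_lower_bound[OF assms(1)]) auto
  then show ?thesis
    by (simp add: rhoM_def norm_minus_commute)
qed

lemma rhoM_locally_star_shaped_at_zero:
  fixes z :: "'a::real_normed_vector"
  assumes metric: "is_metric (rhoM M :: 'a \<Rightarrow> 'a \<Rightarrow> real)"
    and nonneg: "\<forall>s t. 0 \<le> s \<longrightarrow> 0 \<le> t \<longrightarrow> 0 \<le> M s t"
    and "mod_incr (M 0)" "z \<noteq> 0"
  shows "\<exists>r0>0. \<forall>r. 0 < r \<and> r < r0 \<longrightarrow> star_shaped_wrt (dball (rhoM M) 0 r) (0::'a)"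
proof -
  have pos: "0 < M 0 (norm w)" if "w \<noteq> 0" for w :: 'a
    using M_norm_pos_if_metric[OF metric nonneg, of 0 w] that by simp
  have radial: "rhoM M 0 w \<le> rhoM M 0 u" if "w \<noteq> 0" "norm w \<le> norm u" for u w :: 'a
    using mod_incr_div_mono[OF assms(3), of "norm w" "norm u"] pos that by (simp add: rhoM_def)
  show ?thesis
  proof (intro exI[of _ "rhoM M 0 z"] conjI allI impI)
    show "0 < rhoM M 0 z"
      using pos \<open>z \<noteq> 0\<close> by (simp add: rhoM_def)
  next
    fix r
    assume r: "0 < r \<and> r < rhoM M 0 z"
    show "star_shaped_wrt (dball (rhoM M) 0 r) (0::'a)"
    proof (rule star_shaped_wrt_zero_if_norm_downward_closed)
      show "0 \<in> dball (rhoM M) 0 r" "z \<notin> dball (rhoM M) 0 r"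
        using r by (simp_all add: dball_def rhoM_def)
      show "w \<in> dball (rhoM M) 0 r" if "u \<in> dball (rhoM M) 0 r" "norm w \<le> norm u" for u w :: 'a
        using that radial[of w u] \<open>0 \<in> dball (rhoM M) 0 r\<close>
        by (cases "w = 0") (auto simp: dball_def)
    qed
  qed
qed

lemma rhoM_locally_star_shaped_at_nonzero:
  fixes x :: "'a::real_normed_vector"
  assumes metric: "is_metric (rhoM M :: 'a \<Rightarrow> 'a \<Rightarrow> real)"
    and nonneg: "\<forall>s t. 0 \<le> s \<longrightarrow> 0 \<le> t \<longrightarrow> 0 \<le> M s t"
    and "mod_incr (M (norm x))" "x \<noteq> 0"
  shows "\<exists>r0>0. \<forall>r. 0 < r \<and> r < r0 \<longrightarrow> star_shaped_wrt (dball (rhoM M) x r) x"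
proof -
  define R where "R = norm x / 2"
  have "0 < R"
    using \<open>x \<noteq> 0\<close> by (simp add: R_def)
  have pos: "\<And>b. 0 \<le> b \<Longrightarrow> 0 < M (norm x) b"
    using M_pos_if_metric[OF metric nonneg \<open>x \<noteq> 0\<close>] by blast
  show ?thesis
  proof (intro exI[of _ "R / M (norm x) (norm x + R)"] conjI allI impI)
    show "0 < R / M (norm x) (norm x + R)"
      using pos \<open>0 < R\<close> by simp
  next
    fix r
    assume r: "0 < r \<and> r < R / M (norm x) (norm x + R)"
    have "star_shaped_wrt {y. rhoM M x y < r} x"
    proof (rule star_shaped_wrt_sublevel[OF \<open>0 < R\<close>])
      show "rhoM M x x < r"
        using r by (simp add: rhoM_def)
      show "isCont (rhoM M x) y" if "norm (y - x) \<le> R" for y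
      proof -
        have "norm x \<le> norm y + norm (y - x)"
          using norm_triangle_sub[of x y] by (simp add: norm_minus_commute)
        then have "y \<noteq> 0"
          using that \<open>0 < R\<close> by (auto simp: R_def)
        moreover have "M (norm x) (norm y) \<noteq> 0"
          using pos[of "norm y"] by force
        ultimately show ?thesis
          using isCont_rhoM[of M x y] assms(3) by blast
      qed
      show "r \<le> rhoM M x y" if "R \<le> norm (y - x)" for y
        using rhoM_lower_bound[of M x R y, OF assms(3) pos \<open>0 < R\<close> that] r by linarith
      show "rhoM M x (x + s *\<^sub>R v) < rhoM M x (x + t *\<^sub>R v)"
        if "v \<noteq> 0" "0 \<le> s" "s < t" "t * norm v \<le> R" for v s t
        using rhoM_ray_strict_mono[of M x v s t] assms(3) pos that by (simp add: R_def)
    qed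
    then show "star_shaped_wrt (dball (rhoM M) x r) x"
      by (simp add: dball_def)
  qed
qed

theorem lemma5p4:
  fixes M :: "real \<Rightarrow> real \<Rightarrow> real"
  assumes nontriv: "\<exists>x::'a::real_inner. x \<noteq> 0"
    and nonneg: "\<forall>s t. 0 \<le> s \<longrightarrow> 0 \<le> t \<longrightarrow> 0 \<le> M s t"
    and symm: "\<forall>s t. 0 \<le> s \<longrightarrow> 0 \<le> t \<longrightarrow> M s t = M t s"
    and modinc: "mod_incr2 M"
    and metric: "is_metric (rhoM M :: 'a \<Rightarrow> 'a \<Rightarrow> real)"
  shows "locally_star_shaped (rhoM M :: 'a \<Rightarrow> 'a \<Rightarrow> real)"
  unfolding locally_star_shaped_def
proof
  fix x :: 'a
  have "mod_incr (M (norm x))"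
    using modinc by (simp add: mod_incr2_def)
  show "\<exists>r0>0. \<forall>r. 0 < r \<and> r < r0 \<longrightarrow> star_shaped_wrt (dball (rhoM M) x r) x"
  proof (cases "x = 0")
    case True
    obtain z :: 'a where "z \<noteq> 0"
      using nontriv by blast
    then show ?thesis
      using rhoM_locally_star_shaped_at_zero[OF metric nonneg] \<open>mod_incr (M (norm x))\<close> True
      by simp
  next
    case False
    then show ?thesis
      using rhoM_locally_star_shaped_at_nonzero[OF metric nonneg \<open>mod_incr (M (norm x))\<close>]
      by blast
  qed
qed

end
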